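(* Let $R$ be a commutative ring which is free as an abelian group with $\mathbb{Z}$-basis $V=\{v_k\}_{k\in I}$, let $n\ge2$, $p$ a prime and $r\ge1$, and assume $p\ne2$ or $r>1$. Then the $p$-th power map $X\mapsto X^p$ induces a well-defined group isomorphism $$\psi^p_r:\Gamma(SL_n(R),p^r)/\Gamma(SL_n(R),p^{r+1})\longrightarrow\Gamma(SL_n(R),p^{r+1})/\Gamma(SL_n(R),p^{r+2}),$$ and $\psi^p_r(A_{ij,k,r})=A_{ij,k,r+1}$ for all $1\le i,j\le n$ with $i+j<2n$ and $k\in I$.
   Context: $\Gamma(SL_n(R),p^m)=\ker\big(SL_n(R)\to SL_n(R/p^mR)\big)$. For $m\ge1$ the quotient $\Gamma(SL_n(R),p^m)/\Gamma(SL_n(R),p^{m+1})$ is identified (via reduction mod $p^{m+1}$) with the kernel of $SL_n(R/p^{m+1}R)\to SL_n(R/p^mR)$, and in it $A_{ij,k,m}$ denotes the reduction mod $p^{m+1}$ of $1+p^mv_ke_{ij}$ if $i\ne j$ and of $1+p^mv_k(e_{ii}-e_{nn})$ if $i=j$, where $e_{ij}$ is the matrix unit with $1$ in position $(i,j)$. *)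

theory Defs
  imports "Jordan_Normal_Form.Determinant" "HOL-Algebra.Coset"
begin

text \<open>R is free as an abelian group with Z-basis v indexed by the type 'i (the index set I is UNIV):
  every element is uniquely a finite Z-linear combination of the v k.\<close>
definition free_Z_basis :: "('i \<Rightarrow> 'a::comm_ring_1) \<Rightarrow> bool" where
  "free_Z_basis v \<longleftrightarrow>
     (\<forall>x::'a. \<exists>!c::'i \<Rightarrow> int. finite {k. c k \<noteq> 0} \<and>
        x = (\<Sum>k\<in>{k. c k \<noteq> 0}. of_int (c k) * v k))"

definition mat_cong :: "'a::comm_ring_1 mat \<Rightarrow> 'a mat \<Rightarrow> nat \<Rightarrow> bool" where
  "mat_cong A B m \<longleftrightarrow> (\<forall>i<dim_row A. \<forall>j<dim_col A. of_nat m dvd (A $$ (i,j) - B $$ (i,j)))"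

definition SL :: "nat \<Rightarrow> 'a::comm_ring_1 mat set" where
  "SL n = {A \<in> carrier_mat n n. det A = 1}"

definition Gamma :: "nat \<Rightarrow> nat \<Rightarrow> 'a::comm_ring_1 mat set" where
  "Gamma n m = {A \<in> SL n. mat_cong A (1\<^sub>m n) m}"

definition Gamma_group :: "nat \<Rightarrow> nat \<Rightarrow> 'a::comm_ring_1 mat monoid" where
  "Gamma_group n m = \<lparr>carrier = Gamma n m, mult = (\<lambda>A B. A * B), one = 1\<^sub>m n\<rparr>"

definition Gamma_quot :: "nat \<Rightarrow> nat \<Rightarrow> nat \<Rightarrow> 'a::comm_ring_1 mat set monoid" where
  "Gamma_quot n p m = Gamma_group n (p ^ m) Mod Gamma n (p ^ (m + 1))"

definition unit_mat :: "nat \<Rightarrow> nat \<Rightarrow> nat \<Rightarrow> 'a::comm_ring_1 mat" where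
  "unit_mat n i j = mat n n (\<lambda>(a,b). if a = i \<and> b = j then 1 else 0)"

text \<open>The matrix 1 + p^m v_k e_ij (i /= j), resp. 1 + p^m v_k (e_ii - e_nn) (i = j),
  with 0-based indices, so e_nn is unit_mat n (n-1) (n-1).\<close>
definition A_mat :: "nat \<Rightarrow> nat \<Rightarrow> ('i \<Rightarrow> 'a::comm_ring_1) \<Rightarrow> nat \<Rightarrow> nat \<Rightarrow> 'i \<Rightarrow> nat \<Rightarrow> 'a mat" where
  "A_mat n p v i j k m =
     (if i \<noteq> j then 1\<^sub>m n + (of_nat (p ^ m) * v k) \<cdot>\<^sub>m unit_mat n i j
      else 1\<^sub>m n + (of_nat (p ^ m) * v k) \<cdot>\<^sub>m (unit_mat n i i - unit_mat n (n-1) (n-1)))"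

text \<open>A_{ij,k,m} as an element of Gamma(p^m)/Gamma(p^(m+1)): under the identification with the
  kernel of SL_n(R/p^(m+1)) -> SL_n(R/p^m), it is the class of all X in Gamma(p^m) reducing
  mod p^(m+1) to A_mat.\<close>
definition A_elem :: "nat \<Rightarrow> nat \<Rightarrow> ('i \<Rightarrow> 'a::comm_ring_1) \<Rightarrow> nat \<Rightarrow> nat \<Rightarrow> 'i \<Rightarrow> nat \<Rightarrow> 'a mat set" where
  "A_elem n p v i j k m = {X \<in> Gamma n (p ^ m). mat_cong X (A_mat n p v i j k m) (p ^ (m + 1))}"

end

theory Submission
  imports Defs
begin

text \<open>Write \<open>X \<in> \<Gamma>(p\<^sup>r)\<close> as \<open>1 + D\<close> with \<open>p\<^sup>r | D\<close>. Since \<open>p\<^bsup>r+2\<^esup>\<close> divides \<open>D\<^sup>3\<close> and, as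
  \<open>p \<noteq> 2\<close> or \<open>r > 1\<close>, also \<open>binom(p, 2) D\<^sup>2\<close>, the binomial expansion gives
  \<open>X\<^sup>p \<equiv> 1 + p D (mod p\<^bsup>r+2\<^esup>)\<close>. Hence \<open>X \<mapsto> X\<^sup>p \<Gamma>(p\<^bsup>r+2\<^esup>)\<close> is a homomorphism
  \<open>\<Gamma>(p\<^sup>r) \<rightarrow> \<Gamma>(p\<^bsup>r+1\<^esup>)/\<Gamma>(p\<^bsup>r+2\<^esup>)\<close>, and since \<open>R\<close> has no \<open>p\<close>-torsion its kernel is
  exactly \<open>\<Gamma>(p\<^bsup>r+1\<^esup>)\<close>. It is onto: for \<open>Y = 1 + p\<^bsup>r+1\<^esup> B\<close> in \<open>\<Gamma>(p\<^bsup>r+1\<^esup>)\<close> we have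
  \<open>1 = det Y \<equiv> 1 + p\<^bsup>r+1\<^esup> tr B (mod p\<^bsup>2r+2\<^esup>)\<close>, so \<open>p | tr B\<close>. Such a \<open>B\<close> is congruent
  modulo \<open>p\<close> to a combination of the matrices \<open>e\<^sub>i\<^sub>j\<close> (\<open>i \<noteq> j\<close>) and \<open>e\<^sub>i\<^sub>i - e\<^sub>n\<^sub>n\<close>, and for these
  \<open>1 + p\<^sup>r B\<close> is congruent modulo \<open>p\<^bsup>r+1\<^esup>\<close> to a product of elementary matrices; the
  \<open>p\<close>-th power of such a lift \<open>X\<close> is congruent to \<open>Y\<close>. The first isomorphism theorem yields
  \<open>\<psi>\<^sup>p\<^sub>r\<close>, and lifts of \<open>1 + p\<^sup>r v\<^sub>k e\<^sub>i\<^sub>j\<close> compute the images of the classes \<open>A_elem\<close>.\<close>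

lemma dvd_imp_of_nat_dvd: "(N::nat) dvd N' \<Longrightarrow> (of_nat N :: 'a::comm_semiring_1) dvd of_nat N'"
  by (metis dvd_def of_nat_mult)

lemma free_Z_basis_inj_mult:
  assumes basis: "free_Z_basis (v :: 'i \<Rightarrow> 'a::comm_ring_1)" and "m \<noteq> 0"
  shows "inj ((*) (of_nat m :: 'a))"
proof (rule injI)
  define is_coord where "is_coord y c \<longleftrightarrow>
    finite {k. c k \<noteq> 0} \<and> y = (\<Sum>k\<in>{k. c k \<noteq> 0}. of_int (c k) * v k)" for y c
  have unique: "\<exists>!c. is_coord y c" for y
    using basis unfolding free_Z_basis_def is_coord_def by blast
  fix x y :: 'a assume "of_nat m * x = of_nat m * y"
  hence zero: "of_nat m * (x - y) = 0" by (simp add: algebra_simps)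
  obtain c where c: "is_coord (x - y) c" using unique by blast
  define c' where "c' k = int m * c k" for k
  have support: "{k. c' k \<noteq> 0} = {k. c k \<noteq> 0}" using \<open>m \<noteq> 0\<close> by (auto simp: c'_def)
  have "of_nat m * (x - y) = (\<Sum>k\<in>{k. c' k \<noteq> 0}. of_int (c' k) * v k)"
    using c unfolding is_coord_def support by (simp add: sum_distrib_left c'_def algebra_simps)
  hence "is_coord 0 c'" using c zero support unfolding is_coord_def by simp
  moreover have "is_coord 0 (\<lambda>k. 0)" unfolding is_coord_def by simp
  ultimately have "c' = (\<lambda>k. 0)" using unique by blast
  hence "c = (\<lambda>k. 0)" using \<open>m \<noteq> 0\<close> by (auto simp: c'_def fun_eq_iff)
  thus "x = y" using c unfolding is_coord_def by simp
qed

lemma inj_mult_of_nat_power: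
  assumes "inj ((*) (of_nat p :: 'a::comm_ring_1))"
  shows "inj ((*) (of_nat (p ^ k) :: 'a))"
proof (induction k)
  case (Suc k)
  have "(*) (of_nat (p ^ Suc k) :: 'a) = (*) (of_nat p) \<circ> (*) (of_nat (p ^ k))"
    by (auto simp: fun_eq_iff mult.assoc)
  thus ?case using inj_compose[OF assms Suc.IH] by (simp only:)
qed (simp add: inj_on_def)

lemma of_nat_mult_dvd_cancel:
  assumes "inj ((*) (of_nat a :: 'a::comm_ring_1))" and "of_nat (a * b) dvd of_nat a * (x::'a)"
  shows "of_nat b dvd x"
proof -
  obtain y where "of_nat a * x = of_nat a * (of_nat b * y)" using assms(2) by (auto simp: dvd_def mult.assoc)
  hence "x = of_nat b * y" using injD[OF assms(1)] by blast
  thus ?thesis by simp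
qed

section \<open>Congruences of matrices\<close>

definition mat_dvd :: "nat \<Rightarrow> 'a::comm_ring_1 mat \<Rightarrow> bool" where
  "mat_dvd N M \<longleftrightarrow> (\<forall>i<dim_row M. \<forall>j<dim_col M. of_nat N dvd M $$ (i, j))"

definition mat_trace :: "'a::comm_ring_1 mat \<Rightarrow> 'a" where
  "mat_trace M = (\<Sum>i<dim_row M. M $$ (i, i))"

lemma mat_cong_iff_mat_dvd:
  "A \<in> carrier_mat n n \<Longrightarrow> B \<in> carrier_mat n n \<Longrightarrow> mat_cong A B N \<longleftrightarrow> mat_dvd N (A - B)"
  unfolding mat_cong_def mat_dvd_def by auto

lemma mat_cong_add_left_iff:
  "A \<in> carrier_mat n n \<Longrightarrow> D \<in> carrier_mat n n \<Longrightarrow> mat_cong (A + D) A N \<longleftrightarrow> mat_dvd N D"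
  unfolding mat_cong_def mat_dvd_def by auto

lemma mat_dvd_dvd: "mat_dvd N' A \<Longrightarrow> N dvd N' \<Longrightarrow> mat_dvd N A"
  unfolding mat_dvd_def by (meson dvd_trans dvd_imp_of_nat_dvd)

lemma mat_dvd_smult: "mat_dvd N A \<Longrightarrow> mat_dvd N (c \<cdot>\<^sub>m A)"
  unfolding mat_dvd_def by auto

lemma mat_dvd_smult_of_nat: "mat_dvd N A \<Longrightarrow> mat_dvd (M * N) (of_nat M \<cdot>\<^sub>m A)"
  unfolding mat_dvd_def by (auto simp: mult_dvd_mono)

lemma mat_dvd_smult_cancel:
  assumes "inj ((*) (of_nat a :: 'a::comm_ring_1))"
  shows "mat_dvd (a * b) (of_nat a \<cdot>\<^sub>m (A :: 'a mat)) \<longleftrightarrow> mat_dvd b A"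
proof -
  have "of_nat (a * b) dvd of_nat a * x \<longleftrightarrow> of_nat b dvd x" for x :: 'a
    using of_nat_mult_dvd_cancel[OF assms] mult_dvd_mono[OF dvd_refl, of "of_nat b" x "of_nat a"]
    by (metis of_nat_mult)
  thus ?thesis unfolding mat_dvd_def by simp
qed

lemma mat_dvd_mult:
  assumes "A \<in> carrier_mat n n" "B \<in> carrier_mat n n" "mat_dvd a A" "mat_dvd b B"
  shows "mat_dvd (a * b) (A * B)"
  using assms unfolding mat_dvd_def by (auto simp: scalar_prod_def intro!: dvd_sum mult_dvd_mono)

lemma mat_dvd_add:
  "A \<in> carrier_mat n n \<Longrightarrow> B \<in> carrier_mat n n \<Longrightarrow> mat_dvd N A \<Longrightarrow> mat_dvd N B \<Longrightarrow> mat_dvd N (A + B)"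
  unfolding mat_dvd_def by auto

lemma mat_dvd_obtain_smult:
  assumes "D \<in> carrier_mat n n" "mat_dvd N D"
  obtains B where "B \<in> carrier_mat n n" "D = of_nat N \<cdot>\<^sub>m B"
proof -
  have "\<forall>i<n. \<forall>j<n. \<exists>b. D $$ (i, j) = of_nat N * b"
    using assms unfolding mat_dvd_def by (auto elim!: dvdE)
  then obtain b where "\<forall>i<n. \<forall>j<n. D $$ (i, j) = of_nat N * b i j" by metis
  hence "D = of_nat N \<cdot>\<^sub>m mat n n (\<lambda>(i, j). b i j)" using assms(1) by (intro eq_matI) auto
  thus thesis by (rule that[rotated]) simp
qed

lemma mat_cong_refl: "mat_cong A A N"
  unfolding mat_cong_def by auto

lemma mat_cong_sym:
  assumes "A \<in> carrier_mat n n" "B \<in> carrier_mat n n" "mat_cong A B N"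
  shows "mat_cong B A N"
  using assms unfolding mat_cong_def by (metis carrier_matD dvd_minus_iff minus_diff_eq)

lemma mat_cong_trans:
  assumes "A \<in> carrier_mat n n" "B \<in> carrier_mat n n" "mat_cong A B N" "mat_cong B C N"
  shows "mat_cong A C N"
proof -
  have "of_nat N dvd (A $$ (i,j) - B $$ (i,j)) + (B $$ (i,j) - C $$ (i,j))" if "i < n" "j < n" for i j
    using assms that unfolding mat_cong_def by (intro dvd_add) auto
  thus ?thesis using assms unfolding mat_cong_def by auto
qed

lemma mat_cong_dvd: "mat_cong A B N' \<Longrightarrow> N dvd N' \<Longrightarrow> mat_cong A B N"
  unfolding mat_cong_def by (meson dvd_trans dvd_imp_of_nat_dvd)

lemma mat_cong_mult:
  assumes A: "A \<in> carrier_mat n n" "A' \<in> carrier_mat n n" and B: "B \<in> carrier_mat n n" "B' \<in> carrier_mat n n"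
    and "mat_cong A A' N" "mat_cong B B' N"
  shows "mat_cong (A * B) (A' * B') N"
proof -
  have "of_nat N dvd (A * B) $$ (i,j) - (A' * B') $$ (i,j)" if "i < n" "j < n" for i j
  proof -
    have "(A * B) $$ (i,j) - (A' * B') $$ (i,j) =
        (\<Sum>k<n. (A $$ (i,k) - A' $$ (i,k)) * B $$ (k,j) + A' $$ (i,k) * (B $$ (k,j) - B' $$ (k,j)))"
      using A B that by (simp add: scalar_prod_def sum_subtractf[symmetric] algebra_simps atLeast0LessThan)
    also have "of_nat N dvd \<dots>"
      using assms that unfolding mat_cong_def by (intro dvd_sum dvd_add dvd_mult dvd_mult2) auto
    finally show ?thesis .
  qed
  thus ?thesis using A B unfolding mat_cong_def by auto
qed

lemma prod_one_plus_mult_dvd: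
  fixes c :: "'a::comm_ring_1"
  assumes "finite S"
  shows "c\<^sup>2 dvd (\<Prod>i\<in>S. 1 + c * f i) - (1 + c * (\<Sum>i\<in>S. f i))"
  using assms
proof (induction S rule: finite_induct)
  case (insert a S)
  have "(\<Prod>i\<in>insert a S. 1 + c * f i) - (1 + c * (\<Sum>i\<in>insert a S. f i))
      = (1 + c * f a) * ((\<Prod>i\<in>S. 1 + c * f i) - (1 + c * (\<Sum>i\<in>S. f i)))
        + c\<^sup>2 * (f a * (\<Sum>i\<in>S. f i))"
    using insert by (simp add: algebra_simps power2_eq_square)
  also have "c\<^sup>2 dvd \<dots>" using insert by simp
  finally show ?case .
qed simp

text \<open>Only the identity permutation contributes to the Leibniz expansion modulo \<open>c\<^sup>2\<close>:
  any other permutation moves at least two indices, each contributing a factor \<open>c\<close>.\<close>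
lemma det_one_plus_smult_dvd:
  fixes M :: "'a::comm_ring_1 mat"
  assumes M: "M \<in> carrier_mat n n"
  shows "c\<^sup>2 dvd det (1\<^sub>m n + c \<cdot>\<^sub>m M) - (1 + c * mat_trace M)"
proof -
  let ?A = "1\<^sub>m n + c \<cdot>\<^sub>m M"
  let ?t = "\<lambda>\<pi>. of_int (sign \<pi>) * (\<Prod>i = 0..<n. ?A $$ (i, \<pi> i))"
  have off_diagonal: "c\<^sup>2 dvd ?t \<pi>" if \<pi>: "\<pi> permutes {0..<n}" "\<pi> \<noteq> id" for \<pi>
  proof -
    obtain i where i: "\<pi> i \<noteq> i" using \<pi>(2) by (auto simp: fun_eq_iff)
    define j where "j = \<pi> i"
    have "i < n" "j < n" using i \<pi>(1) unfolding j_def by (auto simp: permutes_def)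
    moreover have "\<pi> j \<noteq> j" "j \<noteq> i" using i permutes_inj[OF \<pi>(1)] unfolding j_def inj_def by auto
    ultimately have "(\<Prod>k = 0..<n. ?A $$ (k, \<pi> k))
        = ?A $$ (i, \<pi> i) * (?A $$ (j, \<pi> j) * (\<Prod>k \<in> {0..<n} - {i} - {j}. ?A $$ (k, \<pi> k)))"
      by (simp add: prod.remove[of _ i] prod.remove[of _ j])
    also have "\<dots> = c\<^sup>2 * (M $$ (i, \<pi> i) * M $$ (j, \<pi> j) * (\<Prod>k \<in> {0..<n} - {i} - {j}. ?A $$ (k, \<pi> k)))"
      using \<open>i < n\<close> \<open>j < n\<close> \<open>\<pi> j \<noteq> j\<close> i \<pi>(1) M
      by (simp add: j_def permutes_def power2_eq_square algebra_simps)
    finally show ?thesis by simp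
  qed
  have A: "?A \<in> carrier_mat n n" using M by simp
  have "det ?A = ?t id + (\<Sum>\<pi> \<in> {\<pi>. \<pi> permutes {0..<n}} - {id}. ?t \<pi>)"
    unfolding det_def'[OF A] by (subst sum.remove[of _ id]) (auto intro: permutes_id finite_permutations)
  moreover have "?t id = (\<Prod>i<n. 1 + c * M $$ (i, i))"
    using M by (auto simp: sign_id atLeast0LessThan intro!: prod.cong)
  moreover have "mat_trace M = (\<Sum>i<n. M $$ (i, i))"
    using M by (simp add: mat_trace_def)
  ultimately have "det ?A - (1 + c * mat_trace M)
      = ((\<Prod>i<n. 1 + c * M $$ (i, i)) - (1 + c * (\<Sum>i<n. M $$ (i, i))))
        + (\<Sum>\<pi> \<in> {\<pi>. \<pi> permutes {0..<n}} - {id}. ?t \<pi>)"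
    by simp
  also have "c\<^sup>2 dvd \<dots>"
    using off_diagonal by (intro dvd_add prod_one_plus_mult_dvd dvd_sum) auto
  finally show ?thesis .
qed

lemma det_pow: "A \<in> carrier_mat n n \<Longrightarrow> det (A ^\<^sub>m k) = det A ^ k"
  by (induction k) (auto simp: det_mult[of _ n])

lemma smult_smult_mat: "a \<cdot>\<^sub>m (b \<cdot>\<^sub>m A) = (a * b :: 'a::comm_ring_1) \<cdot>\<^sub>m A"
  by (rule eq_matI) (auto simp: mult.assoc)

section \<open>Principal congruence subgroups\<close>

lemma unit_mat_carrier [simp]: "unit_mat n i j \<in> carrier_mat n n"
  by (simp add: unit_mat_def)

lemma SL_carrier: "A \<in> SL n \<Longrightarrow> A \<in> carrier_mat n n"
  unfolding SL_def by auto

lemma SL_one: "1\<^sub>m n \<in> SL n"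
  unfolding SL_def by auto

lemma SL_mult: "A \<in> SL n \<Longrightarrow> B \<in> SL n \<Longrightarrow> A * B \<in> SL n"
  unfolding SL_def by (auto simp: det_mult)

lemma SL_pow: "A \<in> SL n \<Longrightarrow> A ^\<^sub>m k \<in> SL n"
  unfolding SL_def by (auto simp: det_pow)

lemma SL_adj:
  assumes "A \<in> SL n"
  shows "adj_mat A \<in> SL n" "adj_mat A * A = 1\<^sub>m n" "A * adj_mat A = 1\<^sub>m n"
proof -
  have A: "A \<in> carrier_mat n n" "det A = 1" using assms by (auto simp: SL_def)
  show inverse: "adj_mat A * A = 1\<^sub>m n" "A * adj_mat A = 1\<^sub>m n" using adj_mat[OF A(1)] A by auto
  have "det (adj_mat A) * det A = 1" using inverse det_mult[OF adj_mat(1)[OF A(1)] A(1)] by simp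
  thus "adj_mat A \<in> SL n" using adj_mat(1)[OF A(1)] A by (simp add: SL_def)
qed

lemma SL_one_plus_smult_trace_dvd:
  assumes torsion_free: "inj ((*) (of_nat q :: 'a::comm_ring_1))" and "p dvd q"
    and B: "B \<in> carrier_mat n n" and SL: "1\<^sub>m n + of_nat q \<cdot>\<^sub>m B \<in> (SL n :: 'a mat set)"
  shows "of_nat p dvd mat_trace B"
proof -
  let ?c = "of_nat q :: 'a"
  have "?c\<^sup>2 dvd det (1\<^sub>m n + ?c \<cdot>\<^sub>m B) - (1 + ?c * mat_trace B)"
    by (rule det_one_plus_smult_dvd[OF B])
  hence "?c * ?c dvd ?c * mat_trace B"
    using SL by (simp add: SL_def power2_eq_square)
  moreover have "of_nat (q * p) dvd ?c * ?c"
    unfolding of_nat_mult[symmetric] by (rule dvd_imp_of_nat_dvd) (simp add: assms(2))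
  ultimately have "of_nat (q * p) dvd ?c * mat_trace B"
    by (rule dvd_trans[rotated])
  thus ?thesis using of_nat_mult_dvd_cancel[OF torsion_free] by blast
qed

lemma Gamma_SL: "A \<in> Gamma n N \<Longrightarrow> A \<in> SL n"
  unfolding Gamma_def by auto

lemma Gamma_carrier: "A \<in> Gamma n N \<Longrightarrow> A \<in> carrier_mat n n"
  unfolding Gamma_def SL_def by auto

lemma Gamma_one: "1\<^sub>m n \<in> Gamma n N"
  unfolding Gamma_def by (auto simp: SL_one mat_cong_refl)

lemma Gamma_mult: "A \<in> Gamma n N \<Longrightarrow> B \<in> Gamma n N \<Longrightarrow> A * B \<in> Gamma n N"
  unfolding Gamma_def using SL_mult mat_cong_mult[of A n "1\<^sub>m n" B "1\<^sub>m n" N] by (auto simp: SL_def)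

lemma Gamma_adj:
  assumes "A \<in> Gamma n N"
  shows "adj_mat A \<in> Gamma n N"
proof -
  have A: "A \<in> SL n" "mat_cong A (1\<^sub>m n) N" using assms by (auto simp: Gamma_def)
  note carriers = SL_carrier[OF A(1)] SL_carrier[OF SL_adj(1)[OF A(1)]]
  have "mat_cong (adj_mat A * 1\<^sub>m n) (adj_mat A * A) N"
    using carriers mat_cong_sym[OF carriers(1) _ A(2)] by (intro mat_cong_mult[of _ n]) (auto simp: mat_cong_refl)
  thus ?thesis using SL_adj[OF A(1)] carriers by (simp add: Gamma_def)
qed

lemma Gamma_subset: "N dvd N' \<Longrightarrow> Gamma n N' \<subseteq> Gamma n N"
  unfolding Gamma_def using mat_cong_dvd by blast

lemma Gamma_of_mat_cong:
  assumes "Y \<in> SL n" "A \<in> carrier_mat n n" "mat_cong Y A N" "N' dvd N" "mat_cong A (1\<^sub>m n) N'"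
  shows "Y \<in> Gamma n N'"
  using assms mat_cong_trans[OF SL_carrier, of Y n A N' "1\<^sub>m n"] mat_cong_dvd
  unfolding Gamma_def by blast

lemma Gamma_group_simps [simp]:
  "carrier (Gamma_group n N) = Gamma n N"
  "x \<otimes>\<^bsub>Gamma_group n N\<^esub> y = x * y"
  "\<one>\<^bsub>Gamma_group n N\<^esub> = 1\<^sub>m n"
  by (simp_all add: Gamma_group_def)

lemma group_Gamma_group: "group (Gamma_group n N :: 'a::comm_ring_1 mat monoid)"
proof (rule groupI)
  fix x y z :: "'a mat"
  assume "x \<in> carrier (Gamma_group n N)" "y \<in> carrier (Gamma_group n N)" "z \<in> carrier (Gamma_group n N)"
  thus "x \<otimes>\<^bsub>Gamma_group n N\<^esub> y \<otimes>\<^bsub>Gamma_group n N\<^esub> z = x \<otimes>\<^bsub>Gamma_group n N\<^esub> (y \<otimes>\<^bsub>Gamma_group n N\<^esub> z)"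
    by (simp add: assoc_mult_mat[of _ n n _ n _ n] Gamma_carrier)
next
  fix x :: "'a mat" assume "x \<in> carrier (Gamma_group n N)"
  thus "\<exists>y\<in>carrier (Gamma_group n N). y \<otimes>\<^bsub>Gamma_group n N\<^esub> x = \<one>\<^bsub>Gamma_group n N\<^esub>"
    by (auto intro!: bexI[of _ "adj_mat x"] Gamma_adj SL_adj Gamma_SL)
qed (auto simp: Gamma_one Gamma_mult Gamma_carrier left_mult_one_mat[of _ n n])

lemma Gamma_inv: "A \<in> Gamma n N \<Longrightarrow> inv\<^bsub>Gamma_group n N\<^esub> A = adj_mat A"
  by (intro group.inv_equality[OF group_Gamma_group])
    (auto simp: Gamma_adj SL_adj Gamma_SL)

lemma Gamma_normal:
  assumes "N dvd N'"
  shows "Gamma n N' \<lhd> Gamma_group n N"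
proof -
  interpret group "Gamma_group n N" by (rule group_Gamma_group)
  have "subgroup (Gamma n N') (Gamma_group n N)"
  proof (rule subgroupI)
    fix a assume "a \<in> Gamma n N'"
    thus "inv\<^bsub>Gamma_group n N\<^esub> a \<in> Gamma n N'"
      using Gamma_inv[of a n N] Gamma_subset[OF assms, of n] Gamma_adj[of a n N'] by auto
  qed (use Gamma_subset[OF assms, of n] Gamma_one[of n N'] Gamma_mult in \<open>auto\<close>)
  moreover have "x * h * adj_mat x \<in> Gamma n N'" if x: "x \<in> Gamma n N" and h: "h \<in> Gamma n N'" for x h
  proof -
    note carriers = Gamma_carrier[OF x] Gamma_carrier[OF h] Gamma_carrier[OF Gamma_adj[OF x]]
    have "mat_cong (x * h * adj_mat x) (x * 1\<^sub>m n * adj_mat x) N'"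
      using carriers h by (intro mat_cong_mult[of _ n] mat_cong_refl) (auto simp: Gamma_def)
    moreover have "x * h * adj_mat x \<in> SL n"
      using SL_mult SL_adj Gamma_SL x h by metis
    ultimately show ?thesis using carriers SL_adj[OF Gamma_SL[OF x]] by (simp add: Gamma_def)
  qed
  ultimately show ?thesis
    unfolding normal_inv_iff by (auto simp: Gamma_inv)
qed

lemma Gamma_rcoset:
  assumes X: "X \<in> SL n"
  shows "Gamma n N' #>\<^bsub>Gamma_group n N\<^esub> X = {Y \<in> SL n. mat_cong Y X N'}"
proof (intro equalityI subsetI)
  fix Y assume "Y \<in> Gamma n N' #>\<^bsub>Gamma_group n N\<^esub> X"
  then obtain h where h: "h \<in> Gamma n N'" "Y = h * X" by (auto simp: r_coset_def)
  have "mat_cong (h * X) (1\<^sub>m n * X) N'"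
    using h X by (intro mat_cong_mult[of _ n] mat_cong_refl) (auto simp: Gamma_def SL_def)
  thus "Y \<in> {Y \<in> SL n. mat_cong Y X N'}" using h X SL_mult[OF Gamma_SL] SL_carrier[OF X] by auto
next
  fix Y assume Y: "Y \<in> {Y \<in> SL n. mat_cong Y X N'}"
  note carriers = SL_carrier[OF X] SL_carrier[OF SL_adj(1)[OF X]] SL_carrier[of Y n]
  have "mat_cong (Y * adj_mat X) (X * adj_mat X) N'"
    using Y carriers by (intro mat_cong_mult[of _ n] mat_cong_refl) auto
  hence "Y * adj_mat X \<in> Gamma n N'"
    using SL_adj[OF X] SL_mult[OF _ SL_adj(1)[OF X], of Y] Y by (simp add: Gamma_def)
  moreover have "Y * adj_mat X * X = Y" using Y carriers SL_adj[OF X] by simp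
  ultimately show "Y \<in> Gamma n N' #>\<^bsub>Gamma_group n N\<^esub> X"
    by (auto simp: r_coset_def intro!: bexI[of _ "Y * adj_mat X"])
qed

lemma Gamma_rcoset_eq_iff:
  assumes X: "X \<in> SL n" and Y: "Y \<in> SL n"
  shows "Gamma n N' #>\<^bsub>Gamma_group n N\<^esub> X = Gamma n N' #>\<^bsub>Gamma_group n N\<^esub> Y \<longleftrightarrow> mat_cong X Y N'"
  unfolding Gamma_rcoset[OF X] Gamma_rcoset[OF Y]
proof
  assume "{Z \<in> SL n. mat_cong Z X N'} = {Z \<in> SL n. mat_cong Z Y N'}"
  thus "mat_cong X Y N'" using X mat_cong_refl by blast
next
  assume XY: "mat_cong X Y N'"
  have YX: "mat_cong Y X N'" by (rule mat_cong_sym[OF SL_carrier[OF X] SL_carrier[OF Y] XY])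
  show "{Z \<in> SL n. mat_cong Z X N'} = {Z \<in> SL n. mat_cong Z Y N'}"
    using mat_cong_trans[OF SL_carrier SL_carrier[OF X] _ XY] mat_cong_trans[OF SL_carrier SL_carrier[OF Y] _ YX]
    by blast
qed

lemma Gamma_rcoset_one: "Gamma n N' #>\<^bsub>Gamma_group n N\<^esub> 1\<^sub>m n = Gamma n N'"
  by (subst Gamma_rcoset[OF SL_one]) (simp add: Gamma_def)

section \<open>\<open>p\<close>-th powers of matrices congruent to \<open>1\<close>\<close>

lemma one_plus_mult_one_plus:
  fixes A :: "'a::comm_ring_1 mat"
  assumes "A \<in> carrier_mat n n" "B \<in> carrier_mat n n"
  shows "(1\<^sub>m n + A) * (1\<^sub>m n + B) = 1\<^sub>m n + A + B + A * B"
proof -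
  have "(1\<^sub>m n + A) * (1\<^sub>m n + B) = 1\<^sub>m n * (1\<^sub>m n + B) + A * (1\<^sub>m n + B)"
    using add_mult_distrib_mat[of "1\<^sub>m n" n n A "1\<^sub>m n + B" n] assms by simp
  also have "A * (1\<^sub>m n + B) = A + A * B"
    using mult_add_distrib_mat[OF assms(1) one_carrier_mat assms(2)] assms(1) by simp
  finally show ?thesis using assms by (intro eq_matI) (auto simp del: index_mult_mat(1))
qed

lemma one_plus_pow_second_order_cong:
  fixes D :: "'a::comm_ring_1 mat"
  assumes D: "D \<in> carrier_mat n n" and "mat_dvd q D"
  shows "mat_cong ((1\<^sub>m n + D) ^\<^sub>m k)
           (1\<^sub>m n + of_nat k \<cdot>\<^sub>m D + of_nat (k choose 2) \<cdot>\<^sub>m (D * D)) (q ^ 3)"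
proof (induction k)
  case 0
  show ?case using D by (auto simp: mat_cong_def choose_two)
next
  case (Suc k)
  define S where "S = 1\<^sub>m n + of_nat k \<cdot>\<^sub>m D + of_nat (k choose 2) \<cdot>\<^sub>m (D * D)"
  define T where "T = 1\<^sub>m n + of_nat (Suc k) \<cdot>\<^sub>m D + of_nat (Suc k choose 2) \<cdot>\<^sub>m (D * D)"
  have carriers: "S \<in> carrier_mat n n" "T \<in> carrier_mat n n" using D by (simp_all add: S_def T_def)
  have step: "mat_cong ((1\<^sub>m n + D) ^\<^sub>m Suc k) (S * (1\<^sub>m n + D)) (q ^ 3)"
    using Suc D carriers unfolding S_def[symmetric] by (simp add: mat_cong_mult[of _ n] mat_cong_refl)
  have expand: "S * (1\<^sub>m n + D) = T + of_nat (k choose 2) \<cdot>\<^sub>m (D * D * D)"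
  proof -
    have "Suc k choose 2 = k + (k choose 2)"
      using binomial_Suc_Suc[of k 1] by (simp add: numeral_2_eq_2)
    moreover have "S * (1\<^sub>m n + D) = S + S * D"
      using mult_add_distrib_mat[OF carriers(1) one_carrier_mat D] carriers(1) by simp
    moreover have "S * D = D + of_nat k \<cdot>\<^sub>m (D * D) + of_nat (k choose 2) \<cdot>\<^sub>m (D * D * D)"
      unfolding S_def using D
      by (simp add: add_mult_distrib_mat[of _ n n] mult_smult_assoc_mat[of _ n n])
    ultimately show ?thesis
      unfolding T_def S_def
      by (intro eq_matI) (use D in \<open>auto simp del: index_mult_mat(1) assoc_mult_mat simp: algebra_simps\<close>)
  qed
  have "mat_dvd (q * q * q) (D * D * D)"
    using D assms(2) by (intro mat_dvd_mult[of _ n] mult_carrier_mat) auto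
  hence cubic_vanishes: "mat_cong (T + of_nat (k choose 2) \<cdot>\<^sub>m (D * D * D)) T (q ^ 3)"
    using carriers D by (subst mat_cong_add_left_iff[of _ n]) (auto simp: power3_eq_cube mat_dvd_smult)
  show ?case unfolding T_def[symmetric]
    by (rule mat_cong_trans[OF _ _ step[unfolded expand] cubic_vanishes]) (use carriers D in auto)
qed

lemma one_plus_smult_cong: "M \<in> carrier_mat n n \<Longrightarrow> mat_cong (1\<^sub>m n + of_nat N \<cdot>\<^sub>m M) (1\<^sub>m n) N"
  unfolding mat_cong_def by auto

lemma mat_cong_one_obtain:
  assumes "X \<in> carrier_mat n n" "mat_cong X (1\<^sub>m n) N"
  obtains D where "D \<in> carrier_mat n n" "mat_dvd N D" "X = 1\<^sub>m n + D"
proof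
  show "X - 1\<^sub>m n \<in> carrier_mat n n" "X = 1\<^sub>m n + (X - 1\<^sub>m n)" using assms(1) by (auto intro!: eq_matI)
  show "mat_dvd N (X - 1\<^sub>m n)" using assms by (simp add: mat_cong_iff_mat_dvd)
qed

lemma Gamma_obtain:
  assumes "X \<in> Gamma n N"
  obtains D where "D \<in> carrier_mat n n" "mat_dvd N D" "X = 1\<^sub>m n + D"
  using mat_cong_one_obtain[OF Gamma_carrier[OF assms]] assms unfolding Gamma_def by blast

locale pth_power_level =
  fixes p r :: nat
  assumes prime: "prime p" and level_pos: "r \<ge> 1" and odd_or_level_gt_one: "p \<noteq> 2 \<or> r > 1"
begin

lemma level_dvd_square: "p ^ (r + 2) dvd p * (p ^ r * p ^ r)"
  unfolding power_add[symmetric] power_Suc[symmetric] using level_pos by (intro le_imp_power_dvd) auto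

text \<open>The hypothesis \<open>p \<noteq> 2 \<or> r > 1\<close> is used only here: it kills the quadratic term of the
  binomial expansion of \<open>(1 + D)\<^sup>p\<close> for \<open>p\<^sup>r | D\<close>.\<close>
lemma power_dvd_choose_two: "p ^ (r + 2) dvd (p choose 2) * (p ^ r * p ^ r)"
proof (cases "p = 2")
  case True
  hence "r + 2 \<le> r + r" using odd_or_level_gt_one by auto
  hence "p ^ (r + 2) dvd p ^ r * p ^ r" unfolding power_add[symmetric] by (rule le_imp_power_dvd)
  thus ?thesis by (rule dvd_mult)
next
  case False
  hence "odd p" using prime prime_odd_nat prime_ge_2_nat by (metis le_neq_implies_less)
  hence "p choose 2 = p * ((p - 1) div 2)" by (auto simp: choose_two elim!: oddE)
  hence "(p choose 2) * (p ^ r * p ^ r) = ((p - 1) div 2) * (p * (p ^ r * p ^ r))" by simp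
  thus ?thesis using level_dvd_square by (metis dvd_mult)
qed

lemma one_plus_power_cong:
  fixes D :: "'a::comm_ring_1 mat"
  assumes D: "D \<in> carrier_mat n n" and "mat_dvd (p ^ r) D"
  shows "mat_cong ((1\<^sub>m n + D) ^\<^sub>m p) (1\<^sub>m n + of_nat p \<cdot>\<^sub>m D) (p ^ (r + 2))"
proof -
  have expansion: "mat_cong ((1\<^sub>m n + D) ^\<^sub>m p)
      (1\<^sub>m n + of_nat p \<cdot>\<^sub>m D + of_nat (p choose 2) \<cdot>\<^sub>m (D * D)) (p ^ (r + 2))"
  proof (rule mat_cong_dvd[OF one_plus_pow_second_order_cong[OF assms]])
    show "p ^ (r + 2) dvd (p ^ r) ^ 3"
      unfolding power_mult[symmetric] using level_pos by (intro le_imp_power_dvd) auto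
  qed
  moreover have "mat_dvd (p ^ (r + 2)) (of_nat (p choose 2) \<cdot>\<^sub>m (D * D))"
    by (rule mat_dvd_dvd[OF mat_dvd_smult_of_nat[OF mat_dvd_mult[OF D D assms(2) assms(2)]]
          power_dvd_choose_two])
  hence quadratic_vanishes: "mat_cong (1\<^sub>m n + of_nat p \<cdot>\<^sub>m D + of_nat (p choose 2) \<cdot>\<^sub>m (D * D))
      (1\<^sub>m n + of_nat p \<cdot>\<^sub>m D) (p ^ (r + 2))"
    using D by (subst mat_cong_add_left_iff[of _ n]) auto
  show ?thesis by (rule mat_cong_trans[OF _ _ expansion quadratic_vanishes]) (use D in auto)
qed

lemma one_plus_mult_power_cong:
  fixes D E :: "'a::comm_ring_1 mat"
  assumes D: "D \<in> carrier_mat n n" "mat_dvd (p ^ r) D" and E: "E \<in> carrier_mat n n" "mat_dvd (p ^ r) E"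
  shows "mat_cong (((1\<^sub>m n + D) * (1\<^sub>m n + E)) ^\<^sub>m p) ((1\<^sub>m n + D) ^\<^sub>m p * (1\<^sub>m n + E) ^\<^sub>m p) (p ^ (r + 2))"
proof -
  let ?L = "1\<^sub>m n + of_nat p \<cdot>\<^sub>m D + of_nat p \<cdot>\<^sub>m E"
  have DE: "D * E \<in> carrier_mat n n" "mat_dvd (p ^ r * p ^ r) (D * E)"
    using mat_dvd_mult[OF D(1) E(1) D(2) E(2)] D E by auto
  have "mat_dvd (p ^ r) (D + E + D * E)"
    using D E DE by (intro mat_dvd_add[of _ n] mat_dvd_dvd[OF DE(2)]) auto
  moreover have "(1\<^sub>m n + D) * (1\<^sub>m n + E) = 1\<^sub>m n + (D + E + D * E)"
    using D E by (auto simp: one_plus_mult_one_plus intro!: eq_matI)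
  moreover have "1\<^sub>m n + of_nat p \<cdot>\<^sub>m (D + E + D * E) = ?L + of_nat p \<cdot>\<^sub>m (D * E)"
    using D E by (intro eq_matI) (auto simp del: index_mult_mat(1) simp: algebra_simps)
  ultimately have left: "mat_cong (((1\<^sub>m n + D) * (1\<^sub>m n + E)) ^\<^sub>m p)
      (?L + of_nat p \<cdot>\<^sub>m (D * E)) (p ^ (r + 2))"
    using one_plus_power_cong[of "D + E + D * E" n] D E DE by auto
  have "mat_cong ((1\<^sub>m n + D) ^\<^sub>m p * (1\<^sub>m n + E) ^\<^sub>m p)
      ((1\<^sub>m n + of_nat p \<cdot>\<^sub>m D) * (1\<^sub>m n + of_nat p \<cdot>\<^sub>m E)) (p ^ (r + 2))"
    using D E by (intro mat_cong_mult[of _ n] one_plus_power_cong) auto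
  moreover have "(1\<^sub>m n + of_nat p \<cdot>\<^sub>m D) * (1\<^sub>m n + of_nat p \<cdot>\<^sub>m E) = ?L + of_nat p \<cdot>\<^sub>m (of_nat p \<cdot>\<^sub>m (D * E))"
    using D E by (simp add: one_plus_mult_one_plus mult_smult_assoc_mat[of _ n n] mult_smult_distrib[of _ n n])
  ultimately have right: "mat_cong ((1\<^sub>m n + D) ^\<^sub>m p * (1\<^sub>m n + E) ^\<^sub>m p)
      (?L + of_nat p \<cdot>\<^sub>m (of_nat p \<cdot>\<^sub>m (D * E))) (p ^ (r + 2))"
    by simp
  have "mat_dvd (p ^ (r + 2)) (of_nat p \<cdot>\<^sub>m (D * E))"
    using mat_dvd_smult_of_nat[OF DE(2)] level_dvd_square by (rule mat_dvd_dvd)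
  hence linear_left: "mat_cong (?L + of_nat p \<cdot>\<^sub>m (D * E)) ?L (p ^ (r + 2))"
    and linear_right: "mat_cong (?L + of_nat p \<cdot>\<^sub>m (of_nat p \<cdot>\<^sub>m (D * E))) ?L (p ^ (r + 2))"
    using D E DE by (auto simp: mat_cong_add_left_iff[of _ n] mat_dvd_smult)
  have "mat_cong (((1\<^sub>m n + D) * (1\<^sub>m n + E)) ^\<^sub>m p) ?L (p ^ (r + 2))"
    by (rule mat_cong_trans[OF _ _ left linear_left]) (use D E in auto)
  moreover have "mat_cong ?L ((1\<^sub>m n + D) ^\<^sub>m p * (1\<^sub>m n + E) ^\<^sub>m p) (p ^ (r + 2))"
    by (rule mat_cong_sym[OF _ _ mat_cong_trans[OF _ _ right linear_right]]) (use D E in auto)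
  ultimately show ?thesis by (rule mat_cong_trans[rotated 2]) (use D E in auto)
qed

lemma one_plus_power_cong_one_iff:
  fixes D :: "'a::comm_ring_1 mat"
  assumes torsion_free: "inj ((*) (of_nat p :: 'a))"
    and D: "D \<in> carrier_mat n n" "mat_dvd (p ^ r) D"
  shows "mat_cong ((1\<^sub>m n + D) ^\<^sub>m p) (1\<^sub>m n) (p ^ (r + 2)) \<longleftrightarrow> mat_dvd (p ^ (r + 1)) D"
proof -
  note linear = one_plus_power_cong[OF D]
  have carriers: "(1\<^sub>m n + D) ^\<^sub>m p \<in> carrier_mat n n" "1\<^sub>m n + of_nat p \<cdot>\<^sub>m D \<in> carrier_mat n n"
    using D by auto
  have "mat_cong ((1\<^sub>m n + D) ^\<^sub>m p) (1\<^sub>m n) (p ^ (r + 2))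
      \<longleftrightarrow> mat_cong (1\<^sub>m n + of_nat p \<cdot>\<^sub>m D) (1\<^sub>m n) (p ^ (r + 2))"
    using mat_cong_trans[OF carriers linear] mat_cong_trans[OF carriers(2,1) mat_cong_sym[OF carriers linear]]
    by blast
  also have "\<dots> \<longleftrightarrow> mat_dvd (p * p ^ (r + 1)) (of_nat p \<cdot>\<^sub>m D)"
    using D by (simp add: mat_cong_add_left_iff[of _ n] ac_simps)
  also have "\<dots> \<longleftrightarrow> mat_dvd (p ^ (r + 1)) D"
    by (rule mat_dvd_smult_cancel[OF torsion_free])
  finally show ?thesis .
qed

lemma power_Gamma:
  assumes X: "X \<in> Gamma n (p ^ r)"
  shows "X ^\<^sub>m p \<in> Gamma n (p ^ (r + 1))"
proof -
  obtain D where D: "D \<in> carrier_mat n n" "mat_dvd (p ^ r) D" and XD: "X = 1\<^sub>m n + D"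
    using Gamma_obtain[OF X] .
  have "mat_dvd (p * p ^ r) (of_nat p \<cdot>\<^sub>m D)" by (rule mat_dvd_smult_of_nat[OF D(2)])
  hence "mat_cong (1\<^sub>m n + of_nat p \<cdot>\<^sub>m D) (1\<^sub>m n) (p ^ (r + 1))"
    using D by (simp add: mat_cong_add_left_iff[of _ n])
  thus ?thesis
    using Gamma_of_mat_cong[OF SL_pow[OF Gamma_SL[OF X]] _ one_plus_power_cong[OF D, folded XD]] D
    by (simp add: le_imp_power_dvd)
qed

lemma power_lift_cong:
  assumes X: "X \<in> carrier_mat n n" and M: "M \<in> carrier_mat n n"
    and lift: "mat_cong X (1\<^sub>m n + of_nat (p ^ r) \<cdot>\<^sub>m M) (p ^ (r + 1))"
  shows "mat_cong (X ^\<^sub>m p) (1\<^sub>m n + of_nat (p ^ (r + 1)) \<cdot>\<^sub>m M) (p ^ (r + 2))"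
proof -
  have "mat_cong X (1\<^sub>m n) (p ^ r)"
    using mat_cong_trans[OF X _ mat_cong_dvd[OF lift] one_plus_smult_cong[OF M]] M by simp
  then obtain D where D: "D \<in> carrier_mat n n" "mat_dvd (p ^ r) D" and XD: "X = 1\<^sub>m n + D"
    using mat_cong_one_obtain[OF X] by blast
  have linear_lift: "mat_cong (1\<^sub>m n + of_nat p \<cdot>\<^sub>m D) (1\<^sub>m n + of_nat (p ^ (r + 1)) \<cdot>\<^sub>m M) (p ^ (r + 2))"
    unfolding mat_cong_def
  proof (intro allI impI)
    fix i j assume "i < dim_row (1\<^sub>m n + of_nat p \<cdot>\<^sub>m D)" "j < dim_col (1\<^sub>m n + of_nat p \<cdot>\<^sub>m D)"
    hence ij: "i < n" "j < n" using D by auto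
    have "D $$ (i, j) - of_nat (p ^ r) * M $$ (i, j) = X $$ (i, j) - (1\<^sub>m n + of_nat (p ^ r) \<cdot>\<^sub>m M) $$ (i, j)"
      using ij D M unfolding XD by simp
    moreover have "of_nat (p ^ (r + 1)) dvd X $$ (i, j) - (1\<^sub>m n + of_nat (p ^ r) \<cdot>\<^sub>m M) $$ (i, j)"
      using lift ij X unfolding mat_cong_def by auto
    ultimately have "of_nat (p ^ (r + 1)) dvd D $$ (i, j) - of_nat (p ^ r) * M $$ (i, j)" by simp
    hence "of_nat p * of_nat (p ^ (r + 1)) dvd of_nat p * (D $$ (i, j) - of_nat (p ^ r) * M $$ (i, j))"
      by (rule mult_dvd_mono[OF dvd_refl])
    thus "of_nat (p ^ (r + 2)) dvd (1\<^sub>m n + of_nat p \<cdot>\<^sub>m D) $$ (i, j) - (1\<^sub>m n + of_nat (p ^ (r + 1)) \<cdot>\<^sub>m M) $$ (i, j)"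
      using ij D M by (simp add: algebra_simps)
  qed
  show ?thesis
    by (rule mat_cong_trans[OF _ _ one_plus_power_cong[OF D, folded XD] linear_lift]) (use X D in auto)
qed

end

section \<open>Lifting \<open>1 + p\<^sup>m M\<close> to \<open>SL\<^sub>n\<close>\<close>

definition liftable :: "nat \<Rightarrow> nat \<Rightarrow> nat \<Rightarrow> 'a::comm_ring_1 mat set" where
  "liftable n p m = {M \<in> carrier_mat n n.
     \<exists>X\<in>SL n. mat_cong X (1\<^sub>m n + of_nat (p ^ m) \<cdot>\<^sub>m M) (p ^ (m + 1))}"

lemma liftable_zero: "0\<^sub>m n n \<in> liftable n p m"
proof -
  have "1\<^sub>m n + of_nat (p ^ m) \<cdot>\<^sub>m 0\<^sub>m n n = (1\<^sub>m n :: 'a::comm_ring_1 mat)" by (rule eq_matI) auto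
  thus ?thesis unfolding liftable_def using SL_one by (auto intro!: bexI[of _ "1\<^sub>m n"] mat_cong_refl)
qed

text \<open>\<open>(1 + p\<^sup>m M\<^sub>1) (1 + p\<^sup>m M\<^sub>2) \<equiv> 1 + p\<^sup>m (M\<^sub>1 + M\<^sub>2)\<close> modulo \<open>p\<^bsup>2m\<^esup>\<close>, hence modulo \<open>p\<^bsup>m+1\<^esup>\<close>.\<close>
lemma liftable_add:
  assumes m: "m \<ge> 1" and "M1 \<in> liftable n p m" "M2 \<in> liftable n p m"
  shows "M1 + M2 \<in> liftable n p m"
proof -
  let ?q = "of_nat (p ^ m) :: 'a"
  obtain X1 where X1: "X1 \<in> SL n" "mat_cong X1 (1\<^sub>m n + ?q \<cdot>\<^sub>m M1) (p ^ (m + 1))"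
    and M1: "M1 \<in> carrier_mat n n" using assms(2) unfolding liftable_def by auto
  obtain X2 where X2: "X2 \<in> SL n" "mat_cong X2 (1\<^sub>m n + ?q \<cdot>\<^sub>m M2) (p ^ (m + 1))"
    and M2: "M2 \<in> carrier_mat n n" using assms(3) unfolding liftable_def by auto
  have product: "mat_cong (X1 * X2) ((1\<^sub>m n + ?q \<cdot>\<^sub>m M1) * (1\<^sub>m n + ?q \<cdot>\<^sub>m M2)) (p ^ (m + 1))"
    using X1 X2 M1 M2 by (intro mat_cong_mult[of _ n]) (auto simp: SL_carrier)
  have expand: "(1\<^sub>m n + ?q \<cdot>\<^sub>m M1) * (1\<^sub>m n + ?q \<cdot>\<^sub>m M2)
      = 1\<^sub>m n + ?q \<cdot>\<^sub>m (M1 + M2) + of_nat (p ^ m) \<cdot>\<^sub>m (?q \<cdot>\<^sub>m (M1 * M2))"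
  proof -
    have "(1\<^sub>m n + ?q \<cdot>\<^sub>m M1) * (1\<^sub>m n + ?q \<cdot>\<^sub>m M2)
        = 1\<^sub>m n + ?q \<cdot>\<^sub>m M1 + ?q \<cdot>\<^sub>m M2 + of_nat (p ^ m) \<cdot>\<^sub>m (?q \<cdot>\<^sub>m (M1 * M2))"
      using M1 M2 by (simp add: one_plus_mult_one_plus mult_smult_assoc_mat[of _ n n] mult_smult_distrib[of _ n n])
    also have "\<dots> = 1\<^sub>m n + ?q \<cdot>\<^sub>m (M1 + M2) + of_nat (p ^ m) \<cdot>\<^sub>m (?q \<cdot>\<^sub>m (M1 * M2))"
      using M1 M2 by (intro eq_matI) (auto simp del: index_mult_mat(1) simp: algebra_simps)
    finally show ?thesis .
  qed
  have "p ^ (m + 1) dvd p ^ m * p ^ m"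
    unfolding power_add[symmetric] using m by (intro le_imp_power_dvd) auto
  moreover have "mat_dvd (p ^ m * p ^ m) (of_nat (p ^ m) \<cdot>\<^sub>m (?q \<cdot>\<^sub>m (M1 * M2)))"
    by (rule mat_dvd_smult_of_nat) (simp add: mat_dvd_def)
  ultimately have "mat_dvd (p ^ (m + 1)) (of_nat (p ^ m) \<cdot>\<^sub>m (?q \<cdot>\<^sub>m (M1 * M2)))"
    by (simp add: mat_dvd_dvd)
  hence linearised: "mat_cong ((1\<^sub>m n + ?q \<cdot>\<^sub>m M1) * (1\<^sub>m n + ?q \<cdot>\<^sub>m M2)) (1\<^sub>m n + ?q \<cdot>\<^sub>m (M1 + M2)) (p ^ (m + 1))"
    unfolding expand using M1 M2 by (simp add: mat_cong_add_left_iff[of _ n])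
  have "mat_cong (X1 * X2) (1\<^sub>m n + ?q \<cdot>\<^sub>m (M1 + M2)) (p ^ (m + 1))"
    by (rule mat_cong_trans[OF _ _ product linearised]) (use SL_carrier[OF SL_mult[OF X1(1) X2(1)]] M1 M2 in auto)
  thus ?thesis unfolding liftable_def using X1 X2 M1 M2 SL_mult by auto
qed

lemma liftable_mat_cong:
  assumes "M \<in> liftable n p m" "M' \<in> carrier_mat n n" "mat_cong M' M p"
  shows "M' \<in> liftable n p m"
proof -
  obtain X where X: "X \<in> SL n" "mat_cong X (1\<^sub>m n + of_nat (p ^ m) \<cdot>\<^sub>m M) (p ^ (m + 1))"
    and M: "M \<in> carrier_mat n n" using assms(1) unfolding liftable_def by auto
  have "mat_cong (1\<^sub>m n + of_nat (p ^ m) \<cdot>\<^sub>m M) (1\<^sub>m n + of_nat (p ^ m) \<cdot>\<^sub>m M') (p ^ (m + 1))"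
    unfolding mat_cong_def
  proof (intro allI impI)
    fix i j assume "i < dim_row (1\<^sub>m n + of_nat (p ^ m) \<cdot>\<^sub>m M)" "j < dim_col (1\<^sub>m n + of_nat (p ^ m) \<cdot>\<^sub>m M)"
    hence ij: "i < n" "j < n" using M by auto
    have "of_nat p dvd M $$ (i, j) - M' $$ (i, j)"
      using assms(3) ij M assms(2) unfolding mat_cong_def by (metis carrier_matD dvd_minus_iff minus_diff_eq)
    hence "of_nat (p ^ m) * of_nat p dvd of_nat (p ^ m) * (M $$ (i, j) - M' $$ (i, j))"
      by (rule mult_dvd_mono[OF dvd_refl])
    thus "of_nat (p ^ (m + 1)) dvd (1\<^sub>m n + of_nat (p ^ m) \<cdot>\<^sub>m M) $$ (i, j) - (1\<^sub>m n + of_nat (p ^ m) \<cdot>\<^sub>m M') $$ (i, j)"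
      using ij M assms(2) by (simp add: algebra_simps)
  qed
  hence "mat_cong X (1\<^sub>m n + of_nat (p ^ m) \<cdot>\<^sub>m M') (p ^ (m + 1))"
    using mat_cong_trans[OF SL_carrier[OF X(1)] _ X(2)] M by simp
  thus ?thesis unfolding liftable_def using X assms(2) by auto
qed

lemma liftable_smult_unit_mat:
  assumes "i < n" "j < n" "i \<noteq> j"
  shows "b \<cdot>\<^sub>m unit_mat n i j \<in> liftable n p m"
proof -
  define X where "X = addrow_mat n (of_nat (p ^ m) * b) i j"
  have "X \<in> SL n" unfolding X_def SL_def using det_addrow_mat[OF assms(3)] by auto
  moreover have "X = 1\<^sub>m n + of_nat (p ^ m) \<cdot>\<^sub>m (b \<cdot>\<^sub>m unit_mat n i j)"
    unfolding X_def by (rule eq_matI) (auto simp: unit_mat_def)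
  ultimately show ?thesis unfolding liftable_def by (auto intro: mat_cong_refl)
qed

lemma addrow_chain_SL:
  fixes u :: "'a::comm_ring_1"
  assumes il: "i < n" "l < n" "i \<noteq> l"
  shows "addrow (- u) l i (addrow 1 i l (addrow u l i (addrow_mat n (u - 1) i l))) \<in> SL n"
    (is "?W \<in> _")
proof -
  let ?E = "\<lambda>a x y. addrow_mat n a x y :: 'a mat"
  have carriers: "?E u l i * ?E (u - 1) i l \<in> carrier_mat n n"
    "?E 1 i l * (?E u l i * ?E (u - 1) i l) \<in> carrier_mat n n"
    "?E (- u) l i * (?E 1 i l * (?E u l i * ?E (u - 1) i l)) \<in> carrier_mat n n" by auto
  have "?W = ?E (- u) l i * (?E 1 i l * (?E u l i * ?E (u - 1) i l))"
  proof -
    have "addrow u l i (?E (u - 1) i l) = ?E u l i * ?E (u - 1) i l"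
      using addrow_mat[OF addrow_mat_carrier il(1)] .
    moreover have "addrow 1 i l (?E u l i * ?E (u - 1) i l) = ?E 1 i l * (?E u l i * ?E (u - 1) i l)"
      using addrow_mat[OF carriers(1) il(2)] .
    moreover have "addrow (- u) l i (?E 1 i l * (?E u l i * ?E (u - 1) i l))
        = ?E (- u) l i * (?E 1 i l * (?E u l i * ?E (u - 1) i l))"
      using addrow_mat[OF carriers(2) il(1)] .
    ultimately show ?thesis by simp
  qed
  moreover have "det (?E (- u) l i * (?E 1 i l * (?E u l i * ?E (u - 1) i l))) = 1"
    unfolding det_mult[OF addrow_mat_carrier carriers(2)] det_mult[OF addrow_mat_carrier carriers(1)]
      det_mult[OF addrow_mat_carrier addrow_mat_carrier]
    using il by (simp add: det_addrow_mat)
  ultimately show ?thesis using carriers by (simp add: SL_def)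
qed

text \<open>With \<open>u = p\<^sup>m b\<close>, the product of elementary matrices of \<open>addrow_chain_SL\<close> agrees with
  \<open>1 + u (e\<^sub>i\<^sub>i - e\<^sub>l\<^sub>l)\<close> up to terms divisible by \<open>u\<^sup>2\<close>.\<close>
lemma liftable_smult_diag:
  assumes il: "i < n" "l < n" "i \<noteq> l" and m: "m \<ge> 1"
  shows "b \<cdot>\<^sub>m (unit_mat n i i - unit_mat n l l) \<in> liftable n p m"
proof -
  define u where "u = (of_nat (p ^ m) :: 'a) * b"
  define W where "W = addrow (- u) l i (addrow 1 i l (addrow u l i (addrow_mat n (u - 1) i l)))"
  have W: "W \<in> SL n" unfolding W_def by (rule addrow_chain_SL[OF il(1-3)])
  have "(of_nat (p ^ (m + 1)) :: 'a) dvd u * u"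
  proof -
    have "p ^ (m + 1) dvd p ^ m * p ^ m" unfolding power_add[symmetric] using m by (intro le_imp_power_dvd) auto
    hence "(of_nat (p ^ (m + 1)) :: 'a) dvd of_nat (p ^ m) * of_nat (p ^ m)"
      using dvd_imp_of_nat_dvd by fastforce
    thus ?thesis unfolding u_def by (simp add: mult_dvd_mono ac_simps dvd_mult2)
  qed
  moreover have "W $$ (x, y) - (1\<^sub>m n + of_nat (p ^ m) \<cdot>\<^sub>m (b \<cdot>\<^sub>m (unit_mat n i i - unit_mat n l l))) $$ (x, y)
      = u * u * (if x = i \<and> y = l then 1 else if x = l \<and> y = i then -1 else if x = l \<and> y = l then 1 - u else 0)"
    if "x < n" "y < n" for x y
    unfolding W_def using that il by (auto simp: unit_mat_def u_def algebra_simps)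
  moreover have "dim_row W = n" "dim_col W = n" unfolding W_def by auto
  ultimately have "mat_cong W (1\<^sub>m n + of_nat (p ^ m) \<cdot>\<^sub>m (b \<cdot>\<^sub>m (unit_mat n i i - unit_mat n l l))) (p ^ (m + 1))"
    unfolding mat_cong_def by simp
  thus ?thesis unfolding liftable_def using W by (auto simp: minus_carrier_mat)
qed

text \<open>The matrices \<open>e\<^sub>i\<^sub>j\<close> (\<open>i \<noteq> j\<close>) and \<open>e\<^sub>i\<^sub>i - e\<^sub>n\<^sub>n\<close> of the statement, with 0-based indices;
  \<open>sl_basis n (n - 1) (n - 1) = 0\<close>.\<close>
definition sl_basis :: "nat \<Rightarrow> nat \<Rightarrow> nat \<Rightarrow> 'a::comm_ring_1 mat" where
  "sl_basis n i j = (if i \<noteq> j then unit_mat n i j else unit_mat n i i - unit_mat n (n - 1) (n - 1))"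

lemma sl_basis_carrier [simp]: "sl_basis n i j \<in> carrier_mat n n"
  unfolding sl_basis_def by (auto simp: minus_carrier_mat)

lemma sl_basis_dim [simp]: "dim_row (sl_basis n i j) = n" "dim_col (sl_basis n i j) = n"
  unfolding sl_basis_def by (auto simp: unit_mat_def)

lemma sl_basis_index:
  "x < n \<Longrightarrow> y < n \<Longrightarrow> sl_basis n a c $$ (x, y) =
    (if a \<noteq> c then (if x = a \<and> y = c then 1 else 0)
     else (if x = a \<and> y = a then 1 else 0) - (if x = n - 1 \<and> y = n - 1 then 1 else 0))"
  unfolding sl_basis_def by (auto simp: unit_mat_def)

lemma A_mat_sl_basis: "A_mat n p v i j k m = 1\<^sub>m n + of_nat (p ^ m) \<cdot>\<^sub>m (v k \<cdot>\<^sub>m sl_basis n i j)"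
  unfolding A_mat_def sl_basis_def by (simp add: smult_smult_mat)

lemma liftable_smult_sl_basis:
  assumes "a < n" "c < n" "m \<ge> 1"
  shows "b \<cdot>\<^sub>m sl_basis n a c \<in> liftable n p m"
proof (cases "a = c")
  case False
  thus ?thesis using liftable_smult_unit_mat assms by (simp add: sl_basis_def)
next
  case True
  show ?thesis
  proof (cases "a = n - 1")
    case False
    thus ?thesis using liftable_smult_diag[of a n "n - 1" m b p] assms True by (simp add: sl_basis_def)
  next
    case True
    have "b \<cdot>\<^sub>m sl_basis n a c = 0\<^sub>m n n" using True \<open>a = c\<close> by (intro eq_matI) (auto simp: sl_basis_index)
    thus ?thesis using liftable_zero by simp
  qed
qed

lemma liftable_sum:
  assumes "m \<ge> 1" "finite S" "\<And>s. s \<in> S \<Longrightarrow> f s \<in> liftable n p m"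
  shows "mat n n (\<lambda>xy. \<Sum>s\<in>S. f s $$ xy) \<in> liftable n p m"
  using assms(2,3)
proof (induction S rule: finite_induct)
  case empty
  have "mat n n (\<lambda>xy. \<Sum>s\<in>{}. f s $$ xy) = 0\<^sub>m n n" by (rule eq_matI) auto
  thus ?case using liftable_zero by simp
next
  case (insert s S)
  have "f s \<in> carrier_mat n n" using insert(4) by (simp add: liftable_def)
  hence "mat n n (\<lambda>xy. \<Sum>s\<in>insert s S. f s $$ xy) = mat n n (\<lambda>xy. \<Sum>s\<in>S. f s $$ xy) + f s"
    using insert(1,2) by (intro eq_matI) (auto simp: add.commute)
  moreover have "mat n n (\<lambda>xy. \<Sum>s\<in>S. f s $$ xy) \<in> liftable n p m" "f s \<in> liftable n p m"
    using insert by auto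
  ultimately show ?case using liftable_add[OF assms(1)] by metis
qed

lemma sl_basis_expansion:
  fixes B :: "'a::comm_ring_1 mat"
  assumes "x < n" "y < n"
  shows "(\<Sum>(a, c)\<in>{0..<n} \<times> {0..<n}. B $$ (a, c) * sl_basis n a c $$ (x, y))
       = B $$ (x, y) - (if x = n - 1 \<and> y = n - 1 then (\<Sum>a<n. B $$ (a, a)) else 0)"
proof -
  let ?d = "\<lambda>a. if x = a \<and> y = a then 1 else 0" and ?l = "if x = n - 1 \<and> y = n - 1 then 1 else 0"
  have row: "(\<Sum>c\<in>{0..<n}. B $$ (a, c) * sl_basis n a c $$ (x, y))
      = (if a = x \<and> x \<noteq> y then B $$ (x, y) else 0) + B $$ (a, a) * (?d a - ?l)" if "a < n" for a
  proof -
    have "(\<Sum>c\<in>{0..<n}. B $$ (a, c) * sl_basis n a c $$ (x, y))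
        = (\<Sum>c\<in>{0..<n}. (if c = y then (if a = x \<and> x \<noteq> y then B $$ (x, y) else 0) else 0)
            + (if c = a then B $$ (a, a) * (?d a - ?l) else 0))"
      using assms that by (intro sum.cong) (auto simp: sl_basis_index)
    thus ?thesis using assms that by (simp add: sum.distrib)
  qed
  have "(\<Sum>(a, c)\<in>{0..<n} \<times> {0..<n}. B $$ (a, c) * sl_basis n a c $$ (x, y))
      = (\<Sum>a\<in>{0..<n}. (if a = x then (if x \<noteq> y then B $$ (x, y) else 0) else 0)
          + ((if a = x then (if x = y then B $$ (x, x) else 0) else 0) - B $$ (a, a) * ?l))"
    unfolding sum.cartesian_product[symmetric] using assms
    by (intro sum.cong) (auto simp: row algebra_simps)
  also have "\<dots> = B $$ (x, y) - (if x = n - 1 \<and> y = n - 1 then (\<Sum>a<n. B $$ (a, a)) else 0)"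
    using assms by (auto simp: sum.distrib sum_subtractf atLeast0LessThan)
  finally show ?thesis .
qed

lemma liftable_of_trace:
  assumes m: "m \<ge> 1" and B: "B \<in> carrier_mat n n" and trace: "of_nat p dvd mat_trace B"
  shows "B \<in> liftable n p m"
proof -
  let ?S = "mat n n (\<lambda>xy. \<Sum>s\<in>{0..<n} \<times> {0..<n}. (B $$ s \<cdot>\<^sub>m sl_basis n (fst s) (snd s)) $$ xy)"
  have "?S \<in> liftable n p m"
    by (rule liftable_sum[OF m]) (auto intro: liftable_smult_sl_basis[OF _ _ m])
  moreover have "?S $$ (x, y) = B $$ (x, y) - (if x = n - 1 \<and> y = n - 1 then mat_trace B else 0)"
    if "x < n" "y < n" for x y
    using sl_basis_expansion[OF that, of B] that B
    by (simp add: mat_trace_def case_prod_beta cong: sum.cong)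
  hence "mat_cong B ?S p" using B trace by (auto simp: mat_cong_def)
  ultimately show ?thesis by (rule liftable_mat_cong[OF _ B])
qed

section \<open>The isomorphism\<close>

lemma (in group_hom) the_elem_image_kernel_rcoset:
  assumes g: "g \<in> carrier G"
  shows "the_elem (h ` (kernel G H h #> g)) = h g"
proof -
  have "h (k \<otimes> g) = h g" if "k \<in> kernel G H h" for k
    using that g by (simp add: kernel_def)
  moreover have "g \<in> kernel G H h #> g"
    using g subgroup.one_closed[OF subgroup_kernel] unfolding r_coset_def by force
  ultimately have "h ` (kernel G H h #> g) = {h g}"
    unfolding r_coset_def by blast
  thus ?thesis by simp
qed

definition power_coset :: "nat \<Rightarrow> nat \<Rightarrow> nat \<Rightarrow> 'a::comm_ring_1 mat \<Rightarrow> 'a mat set" where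
  "power_coset n p r X = Gamma n (p ^ (r + 2)) #>\<^bsub>Gamma_group n (p ^ (r + 1))\<^esub> (X ^\<^sub>m p)"

text \<open>The map \<open>\<psi>\<^sup>p\<^sub>r\<close>; \<open>power_coset\<close> is constant on each coset of \<open>\<Gamma>(p\<^bsup>r+1\<^esup>)\<close>
  (\<open>kernel_power_coset\<close>), and \<open>the_elem\<close> picks that value.\<close>
definition power_map :: "nat \<Rightarrow> nat \<Rightarrow> nat \<Rightarrow> 'a::comm_ring_1 mat set \<Rightarrow> 'a mat set" where
  "power_map n p r C = the_elem (power_coset n p r ` C)"

lemma A_elem_rcoset:
  assumes X: "X \<in> SL n" and lift: "mat_cong X (A_mat n p v i j k m) (p ^ (m + 1))"
  shows "A_elem n p v i j k m = Gamma n (p ^ (m + 1)) #>\<^bsub>Gamma_group n (p ^ m)\<^esub> X"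
proof -
  let ?A = "A_mat n p v i j k m"
  have A: "?A \<in> carrier_mat n n" "mat_cong ?A (1\<^sub>m n) (p ^ m)"
    unfolding A_mat_sl_basis by (simp, rule one_plus_smult_cong, simp)
  have "Y \<in> A_elem n p v i j k m \<longleftrightarrow> mat_cong Y X (p ^ (m + 1))" if Y: "Y \<in> SL n" for Y
  proof
    assume "Y \<in> A_elem n p v i j k m"
    hence "mat_cong Y ?A (p ^ (m + 1))" by (simp add: A_elem_def)
    thus "mat_cong Y X (p ^ (m + 1))"
      by (rule mat_cong_trans[OF SL_carrier[OF Y] A(1) _ mat_cong_sym[OF SL_carrier[OF X] A(1) lift]])
  next
    assume "mat_cong Y X (p ^ (m + 1))"
    hence "mat_cong Y ?A (p ^ (m + 1))" by (rule mat_cong_trans[OF SL_carrier[OF Y] SL_carrier[OF X] _ lift])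
    moreover have "Y \<in> Gamma n (p ^ m)" by (rule Gamma_of_mat_cong[OF Y A(1) calculation _ A(2)]) simp
    ultimately show "Y \<in> A_elem n p v i j k m" by (simp add: A_elem_def)
  qed
  moreover have "A_elem n p v i j k m \<subseteq> SL n" by (auto simp: A_elem_def Gamma_def)
  ultimately show ?thesis unfolding Gamma_rcoset[OF X] by blast
qed

context pth_power_level
begin

lemma power_coset_hom:
  "(power_coset n p r :: 'a::comm_ring_1 mat \<Rightarrow> _) \<in> hom (Gamma_group n (p ^ r)) (Gamma_quot n p (r + 1))"
proof (rule homI)
  fix X :: "'a mat" assume "X \<in> carrier (Gamma_group n (p ^ r))"
  thus "power_coset n p r X \<in> carrier (Gamma_quot n p (r + 1))"
    using power_Gamma unfolding power_coset_def Gamma_quot_def FactGroup_def RCOSETS_def by auto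
next
  fix X Y :: "'a mat"
  assume "X \<in> carrier (Gamma_group n (p ^ r))" "Y \<in> carrier (Gamma_group n (p ^ r))"
  hence X: "X \<in> Gamma n (p ^ r)" and Y: "Y \<in> Gamma n (p ^ r)" by simp_all
  have normal: "Gamma n (p ^ (r + 2)) \<lhd> Gamma_group n (p ^ (r + 1))"
    by (rule Gamma_normal) (simp add: le_imp_power_dvd)
  have "mat_cong ((X * Y) ^\<^sub>m p) (X ^\<^sub>m p * Y ^\<^sub>m p) (p ^ (r + 2))"
  proof -
    obtain D E where "D \<in> carrier_mat n n" "mat_dvd (p ^ r) D" "X = 1\<^sub>m n + D"
      and "E \<in> carrier_mat n n" "mat_dvd (p ^ r) E" "Y = 1\<^sub>m n + E"
      using Gamma_obtain[OF X] Gamma_obtain[OF Y] by metis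
    thus ?thesis using one_plus_mult_power_cong by blast
  qed
  hence "power_coset n p r (X * Y)
      = Gamma n (p ^ (r + 2)) #>\<^bsub>Gamma_group n (p ^ (r + 1))\<^esub> (X ^\<^sub>m p * Y ^\<^sub>m p)"
    unfolding power_coset_def
    by (subst Gamma_rcoset_eq_iff) (use X Y in \<open>auto intro: SL_mult SL_pow Gamma_SL Gamma_mult\<close>)
  also have "\<dots> = power_coset n p r X <#>\<^bsub>Gamma_group n (p ^ (r + 1))\<^esub> power_coset n p r Y"
    using normal.rcos_sum[OF normal, of "X ^\<^sub>m p" "Y ^\<^sub>m p"] power_Gamma[OF X] power_Gamma[OF Y]
    unfolding power_coset_def by (metis Gamma_group_simps(1,2))
  finally show "power_coset n p r (X \<otimes>\<^bsub>Gamma_group n (p ^ r)\<^esub> Y)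
      = power_coset n p r X \<otimes>\<^bsub>Gamma_quot n p (r + 1)\<^esub> power_coset n p r Y"
    by (simp add: Gamma_quot_def FactGroup_def)
qed

lemma group_hom_power_coset:
  "group_hom (Gamma_group n (p ^ r)) (Gamma_quot n p (r + 1)) (power_coset n p r :: 'a::comm_ring_1 mat \<Rightarrow> _)"
proof (intro group_hom.intro group_hom_axioms.intro group_Gamma_group power_coset_hom)
  show "group (Gamma_quot n p (r + 1) :: 'a mat set monoid)"
    unfolding Gamma_quot_def
    by (rule normal.factorgroup_is_group[OF Gamma_normal]) (simp add: le_imp_power_dvd)
qed

lemma kernel_power_coset:
  assumes torsion_free: "inj ((*) (of_nat p :: 'a::comm_ring_1))"
  shows "kernel (Gamma_group n (p ^ r)) (Gamma_quot n p (r + 1)) (power_coset n p r)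
    = (Gamma n (p ^ (r + 1)) :: 'a mat set)"
proof -
  have "power_coset n p r X = Gamma n (p ^ (r + 2)) \<longleftrightarrow> X \<in> Gamma n (p ^ (r + 1))"
    if X: "X \<in> Gamma n (p ^ r)" for X :: "'a mat"
  proof -
    obtain D where D: "D \<in> carrier_mat n n" "mat_dvd (p ^ r) D" and XD: "X = 1\<^sub>m n + D"
      using Gamma_obtain[OF X] .
    have "power_coset n p r X = Gamma n (p ^ (r + 2)) \<longleftrightarrow> mat_cong (X ^\<^sub>m p) (1\<^sub>m n) (p ^ (r + 2))"
      unfolding power_coset_def
      by (subst Gamma_rcoset_one[symmetric, of _ _ "p ^ (r + 1)"])
        (rule Gamma_rcoset_eq_iff[OF SL_pow[OF Gamma_SL[OF X]] SL_one])
    also have "\<dots> \<longleftrightarrow> mat_dvd (p ^ (r + 1)) D"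
      unfolding XD by (rule one_plus_power_cong_one_iff[OF torsion_free D])
    also have "\<dots> \<longleftrightarrow> mat_cong X (1\<^sub>m n) (p ^ (r + 1))"
      unfolding XD using D(1) by (simp add: mat_cong_add_left_iff[of _ n])
    also have "\<dots> \<longleftrightarrow> X \<in> Gamma n (p ^ (r + 1))"
      using Gamma_SL[OF X] by (simp add: Gamma_def)
    finally show ?thesis .
  qed
  moreover have "Gamma n (p ^ (r + 1)) \<subseteq> (Gamma n (p ^ r) :: 'a mat set)"
    by (rule Gamma_subset) simp
  ultimately show ?thesis
    by (auto simp: kernel_def Gamma_quot_def FactGroup_def)
qed

lemma Gamma_power_root_mod:
  assumes torsion_free: "inj ((*) (of_nat p :: 'a::comm_ring_1))" and Y: "(Y :: 'a mat) \<in> Gamma n (p ^ (r + 1))"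
  obtains X where "X \<in> Gamma n (p ^ r)" "mat_cong (X ^\<^sub>m p) Y (p ^ (r + 2))"
proof -
  obtain D where D: "D \<in> carrier_mat n n" "mat_dvd (p ^ (r + 1)) D" and YD: "Y = 1\<^sub>m n + D"
    using Gamma_obtain[OF Y] .
  obtain B where B: "B \<in> carrier_mat n n" "D = of_nat (p ^ (r + 1)) \<cdot>\<^sub>m B"
    using mat_dvd_obtain_smult[OF D(1,2)] .
  have YB: "Y = 1\<^sub>m n + of_nat (p ^ (r + 1)) \<cdot>\<^sub>m B" using YD unfolding B(2) .
  have "of_nat p dvd mat_trace B"
    by (rule SL_one_plus_smult_trace_dvd[OF inj_mult_of_nat_power[OF torsion_free] _ B(1)
          Gamma_SL[OF Y, unfolded YB]]) simp
  hence "B \<in> liftable n p r" by (rule liftable_of_trace[OF level_pos B(1)])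
  then obtain X where X: "X \<in> SL n" "mat_cong X (1\<^sub>m n + of_nat (p ^ r) \<cdot>\<^sub>m B) (p ^ (r + 1))"
    unfolding liftable_def by auto
  have "X \<in> Gamma n (p ^ r)"
    by (rule Gamma_of_mat_cong[OF X(1) _ X(2) _ one_plus_smult_cong[OF B(1)]]) (use B in auto)
  moreover have "mat_cong (X ^\<^sub>m p) Y (p ^ (r + 2))"
    unfolding YB by (rule power_lift_cong[OF SL_carrier[OF X(1)] B(1) X(2)])
  ultimately show thesis by (rule that)
qed

lemma power_coset_surj:
  assumes torsion_free: "inj ((*) (of_nat p :: 'a::comm_ring_1))"
  shows "power_coset n p r ` Gamma n (p ^ r) = (carrier (Gamma_quot n p (r + 1)) :: 'a mat set set)"
proof -
  have preimage: "\<exists>X\<in>Gamma n (p ^ r). power_coset n p r X = Gamma n (p ^ (r + 2)) #>\<^bsub>Gamma_group n (p ^ (r + 1))\<^esub> Y"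
    if Y: "Y \<in> Gamma n (p ^ (r + 1))" for Y :: "'a mat"
  proof -
    obtain X where "X \<in> Gamma n (p ^ r)" "mat_cong (X ^\<^sub>m p) Y (p ^ (r + 2))"
      using Gamma_power_root_mod[OF torsion_free Y] .
    thus ?thesis unfolding power_coset_def
      using Gamma_rcoset_eq_iff[OF SL_pow[OF Gamma_SL] Gamma_SL[OF Y]] by blast
  qed
  show ?thesis
  proof (intro equalityI subsetI)
    fix C assume "C \<in> power_coset n p r ` Gamma n (p ^ r)"
    thus "C \<in> carrier (Gamma_quot n p (r + 1))" using power_coset_hom by (auto simp: hom_def)
  next
    fix C assume "C \<in> carrier (Gamma_quot n p (r + 1) :: 'a mat set monoid)"
    then obtain Y where "Y \<in> Gamma n (p ^ (r + 1))" "C = Gamma n (p ^ (r + 2)) #>\<^bsub>Gamma_group n (p ^ (r + 1))\<^esub> Y"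
      by (auto simp: Gamma_quot_def FactGroup_def RCOSETS_def)
    thus "C \<in> power_coset n p r ` Gamma n (p ^ r)" using preimage by (metis image_iff)
  qed
qed

lemma A_elem_power_coset:
  assumes "i < n" "j < n"
  obtains X where "X \<in> Gamma n (p ^ r)"
    "A_elem n p v i j k r = Gamma n (p ^ (r + 1)) #>\<^bsub>Gamma_group n (p ^ r)\<^esub> X"
    "A_elem n p v i j k (r + 1) = power_coset n p r X"
proof -
  let ?M = "v k \<cdot>\<^sub>m sl_basis n i j"
  have "?M \<in> liftable n p r" by (rule liftable_smult_sl_basis[OF assms level_pos])
  then obtain X where X: "X \<in> SL n" "mat_cong X (1\<^sub>m n + of_nat (p ^ r) \<cdot>\<^sub>m ?M) (p ^ (r + 1))"
    unfolding liftable_def by auto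
  have "X \<in> Gamma n (p ^ r)"
    by (rule Gamma_of_mat_cong[OF X(1) _ X(2) _ one_plus_smult_cong]) auto
  moreover have "A_elem n p v i j k r = Gamma n (p ^ (r + 1)) #>\<^bsub>Gamma_group n (p ^ r)\<^esub> X"
    using A_elem_rcoset[OF X(1)] X(2) by (simp add: A_mat_sl_basis)
  moreover have "mat_cong (X ^\<^sub>m p) (A_mat n p v i j k (r + 1)) (p ^ (r + 1 + 1))"
    using power_lift_cong[OF SL_carrier[OF X(1)] _ X(2)] by (simp add: A_mat_sl_basis)
  hence "A_elem n p v i j k (r + 1) = power_coset n p r X"
    unfolding power_coset_def by (simp add: A_elem_rcoset[OF SL_pow[OF X(1)]])
  ultimately show thesis by (rule that)
qed

lemma power_map_rcoset:
  assumes torsion_free: "inj ((*) (of_nat p :: 'a::comm_ring_1))"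
    and X: "(X :: 'a mat) \<in> Gamma n (p ^ r)"
  shows "power_map n p r (Gamma n (p ^ (r + 1)) #>\<^bsub>Gamma_group n (p ^ r)\<^esub> X) = power_coset n p r X"
proof -
  interpret power: group_hom "Gamma_group n (p ^ r) :: 'a mat monoid" "Gamma_quot n p (r + 1)" "power_coset n p r"
    by (rule group_hom_power_coset)
  have kernel: "kernel (Gamma_group n (p ^ r)) (Gamma_quot n p (r + 1)) (power_coset n p r)
      = (Gamma n (p ^ (r + 1)) :: 'a mat set)"
    by (rule kernel_power_coset[OF torsion_free])
  show ?thesis
    using power.the_elem_image_kernel_rcoset[of X] X unfolding kernel power_map_def by simp
qed

lemma power_map_iso:
  assumes torsion_free: "inj ((*) (of_nat p :: 'a::comm_ring_1))"
  shows "(power_map n p r :: 'a mat set \<Rightarrow> _) \<in> iso (Gamma_quot n p r) (Gamma_quot n p (r + 1))"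
proof -
  interpret power: group_hom "Gamma_group n (p ^ r) :: 'a mat monoid" "Gamma_quot n p (r + 1)" "power_coset n p r"
    by (rule group_hom_power_coset)
  have "(\<lambda>C. the_elem (power_coset n p r ` C)) \<in> iso
      ((Gamma_group n (p ^ r) :: 'a mat monoid) Mod kernel (Gamma_group n (p ^ r)) (Gamma_quot n p (r + 1)) (power_coset n p r))
      (Gamma_quot n p (r + 1))"
    by (rule power.FactGroup_iso_set) (simp add: power_coset_surj[OF torsion_free])
  moreover
  have kernel: "kernel (Gamma_group n (p ^ r)) (Gamma_quot n p (r + 1)) (power_coset n p r)
      = (Gamma n (p ^ (r + 1)) :: 'a mat set)"
    by (rule kernel_power_coset[OF torsion_free])
  ultimately show ?thesis
    unfolding power_map_def[abs_def] Gamma_quot_def by simp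
qed

lemma power_map_A_elem:
  assumes torsion_free: "inj ((*) (of_nat p :: 'a::comm_ring_1))"
    and "i < n" "j < n"
  shows "power_map n p r (A_elem n p (v :: 'i \<Rightarrow> 'a) i j k r) = A_elem n p v i j k (r + 1)"
proof -
  obtain X where "X \<in> Gamma n (p ^ r)"
    "A_elem n p v i j k r = Gamma n (p ^ (r + 1)) #>\<^bsub>Gamma_group n (p ^ r)\<^esub> X"
    "A_elem n p v i j k (r + 1) = power_coset n p r X"
    using A_elem_power_coset[OF assms(2,3)] .
  thus ?thesis using power_map_rcoset[OF torsion_free] by simp
qed

end

theorem proposition4p5:
  fixes v :: "'i \<Rightarrow> 'a::comm_ring_1" and n p r :: nat
  assumes "free_Z_basis v"
    and "n \<ge> 2" and "prime p" and "r \<ge> 1" and "p \<noteq> 2 \<or> r > 1"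
  shows "\<exists>\<psi>. (\<forall>X\<in>Gamma n (p ^ r).
               \<psi> (Gamma n (p ^ (r + 1)) #>\<^bsub>Gamma_group n (p ^ r)\<^esub> X)
                 = Gamma n (p ^ (r + 2)) #>\<^bsub>Gamma_group n (p ^ (r + 1))\<^esub> (X ^\<^sub>m p))
            \<and> \<psi> \<in> iso (Gamma_quot n p r) (Gamma_quot n p (r + 1))
            \<and> (\<forall>i<n. \<forall>j<n. \<forall>k. (i + 1) + (j + 1) < 2 * n \<longrightarrow>
                 \<psi> (A_elem n p v i j k r) = A_elem n p v i j k (r + 1))"
proof -
  interpret pth_power_level p r using assms(3-5) by unfold_locales
  have torsion_free: "inj ((*) (of_nat p :: 'a))"
    using free_Z_basis_inj_mult[OF assms(1)] prime_gt_0_nat[OF assms(3)] by blast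
  show ?thesis
  proof (intro exI[of _ "power_map n p r"] conjI ballI allI impI)
    fix X :: "'a mat" assume X: "X \<in> Gamma n (p ^ r)"
    show "power_map n p r (Gamma n (p ^ (r + 1)) #>\<^bsub>Gamma_group n (p ^ r)\<^esub> X)
        = Gamma n (p ^ (r + 2)) #>\<^bsub>Gamma_group n (p ^ (r + 1))\<^esub> (X ^\<^sub>m p)"
      unfolding power_coset_def[symmetric] by (rule power_map_rcoset[OF torsion_free X])
  next
    show "(power_map n p r :: 'a mat set \<Rightarrow> _) \<in> iso (Gamma_quot n p r) (Gamma_quot n p (r + 1))"
      by (rule power_map_iso[OF torsion_free])
  next
    fix i j k assume ij: "i < n" "j < n"
    show "power_map n p r (A_elem n p v i j k r) = A_elem n p v i j k (r + 1)"
      by (rule power_map_A_elem[OF torsion_free ij])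
  qed
qed

end
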